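(* Let $(V,S)$ be a pair of adapted processes $V=(V_t)_{t\in\mathbb{T}}$, $S=(S_t)_{t\in\mathbb{T}\cup\{T\}}$ satisfying properties (i)–(iii) below. Then for every $t\in\mathbb{T}$, on the set $\{t<T_e\}\cap\{V_t>G_t\}$ we have $S_t=E[S_{t+1}\mid\mathcal{F}_t]$ and $S_tV_t=E[S_{t+1}V_{t+1}\mid\mathcal{F}_t]$. (i) $0<S_t\le1$ on $D_t$ and $S_t=0$ on $D_t^c$ for all $t\in\mathbb{T}$, and $V_t=G_t$ on $\{t\ge T_e\}$. (ii) Given $S$, $V$ is the smallest adapted process which dominates $G$ and renders the stopped process $(S_{t\wedge T_e}V_{t\wedge T_e})_{t\in\mathbb{T}}$ a supermartingale. (iii) Given $V$, $S$ is the smallest nonnegative supermartingale on $\mathbb{T}\cup\{T\}$ satisfying $S_t=1$ on $D_t\cap\{V_t=G_t\}$ for all $t\in\mathbb{T}$, and $S_\infty=1_{\{\sigma=\infty\}}$ if $T=\infty$.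
   Context: Let $T\in\mathbb{N}\cup\{\infty\}$, $\mathbb{T}=\{0,\dots,T\}$ if $T<\infty$ and $\mathbb{T}=\{0,1,2,\dots\}$ if $T=\infty$ (supermartingale properties are understood on $\mathbb{T}$ unless stated otherwise). Let $(\Omega,\mathcal{F},P)$ be a probability space with filtration $(\mathcal{F}_t)_{t\le T}$, $\mathcal{F}_0$ trivial. Let $\sigma$ be a stopping time with values in $\{0,1,\dots\}\cup\{\infty\}$, $P(\sigma>0)=1$; $D_t=\{t<\sigma\}$, $D_\infty=\{\sigma=\infty\}$. Let $G=(G_t)_{t\in\mathbb{T}\cup\{T\}}$ be adapted, with $G_t=\Delta$ on $D_t^c$ ($\Delta$ an auxiliary symbol with $0\cdot\Delta=0$), $E[\sup_{t\le T}|G_t|1_{D_t}]<\infty$, and if $T=\infty$, $G_\infty=\limsup_{t\to\infty}G_t$. Effective horizon: $T_e=T\wedge\inf\{0\le t<T:P(D_{t+1}\mid\mathcal{F}_t)=0\}$, with $\inf\emptyset=\infty$. *)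

theory Defs
  imports "HOL-Probability.Probability"
begin

definition time_set :: "enat \<Rightarrow> enat set" where
  "time_set T = {t. t \<le> T \<and> t \<noteq> \<infinity>}"

definition time_set_T :: "enat \<Rightarrow> enat set" where
  "time_set_T T = {t. t \<le> T}"

definition filtration_on :: "'a measure \<Rightarrow> (enat \<Rightarrow> 'a measure) \<Rightarrow> enat set \<Rightarrow> bool" where
  "filtration_on M F I \<longleftrightarrow>
     (\<forall>t\<in>I. subalgebra M (F t)) \<and>
     (\<forall>s\<in>I. \<forall>t\<in>I. s \<le> t \<longrightarrow> sets (F s) \<subseteq> sets (F t))"

definition adapted_on :: "(enat \<Rightarrow> 'a measure) \<Rightarrow> enat set \<Rightarrow> (enat \<Rightarrow> 'a \<Rightarrow> real) \<Rightarrow> bool" where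
  "adapted_on F I X \<longleftrightarrow> (\<forall>t\<in>I. X t \<in> borel_measurable (F t))"

definition supermartingale_on ::
  "'a measure \<Rightarrow> (enat \<Rightarrow> 'a measure) \<Rightarrow> enat set \<Rightarrow> (enat \<Rightarrow> 'a \<Rightarrow> real) \<Rightarrow> bool" where
  "supermartingale_on M F I X \<longleftrightarrow>
     adapted_on F I X \<and> (\<forall>t\<in>I. integrable M (X t)) \<and>
     (\<forall>s\<in>I. \<forall>t\<in>I. s \<le> t \<longrightarrow>
        (AE \<omega> in M. real_cond_exp M (F s) (X t) \<omega> \<le> X s \<omega>))"

definition Dset :: "'a measure \<Rightarrow> ('a \<Rightarrow> enat) \<Rightarrow> enat \<Rightarrow> 'a set" where
  "Dset M \<sigma> t = {\<omega> \<in> space M. if t = \<infinity> then \<sigma> \<omega> = \<infinity> else t < \<sigma> \<omega>}"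

text \<open>Effective horizon T_e = T min inf{0 \<le> t < T : P(D_(t+1) | F_t) = 0}, inf of
  the empty set being infinity (the version of the conditional probability is
  the one given by real_cond_exp).\<close>
definition eff_horizon ::
  "'a measure \<Rightarrow> (enat \<Rightarrow> 'a measure) \<Rightarrow> ('a \<Rightarrow> enat) \<Rightarrow> enat \<Rightarrow> 'a \<Rightarrow> enat" where
  "eff_horizon M F \<sigma> T \<omega> =
     min T (Inf {enat t | t. enat t < T \<and>
        real_cond_exp M (F (enat t)) (indicator (Dset M \<sigma> (enat (Suc t)))) \<omega> = 0})"

definition stopped :: "('a \<Rightarrow> enat) \<Rightarrow> (enat \<Rightarrow> 'a \<Rightarrow> real) \<Rightarrow> enat \<Rightarrow> 'a \<Rightarrow> real" where
  "stopped \<tau> X t \<omega> = X (min t (\<tau> \<omega>)) \<omega>"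

end

theory Submission
  imports Defs
begin

(*
  Both identities follow from the minimality in (ii) and (iii) by perturbing one process at
  the single time t; the reverse inequalities are just the supermartingale properties.

  Off {V_t = G_t} the constraint S_t = 1 is void, so replacing S_t there by the smaller
  E[S_(t+1) | F_t] leaves a nonnegative supermartingale satisfying all constraints of (iii);
  minimality of S forces S_t = E[S_(t+1) | F_t] there.

  Let c = E[S_(t+1) V_(t+1) | F_t], which on {t < T_e} is the conditional expectation of the
  stopped product. Where t < T_e, S_t > 0, V_t > G_t and S_t V_t > c, lowering V_t to
  max(G_t, c / S_t) keeps V above G and the stopped product a supermartingale, but makes V
  strictly smaller; by minimality of V this set is null.
*)

lemma filtration_on_subset:
  "filtration_on M F I \<Longrightarrow> J \<subseteq> I \<Longrightarrow> filtration_on M F J"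
  unfolding filtration_on_def by (meson subsetD)

lemma filtration_on_subalgebra:
  "filtration_on M F I \<Longrightarrow> t \<in> I \<Longrightarrow> subalgebra M (F t)"
  unfolding filtration_on_def by blast

lemma filtration_on_subalgebra_mono:
  assumes "filtration_on M F I" "s \<in> I" "t \<in> I" "s \<le> t"
  shows "subalgebra (F t) (F s)"
  using assms unfolding filtration_on_def subalgebra_def by auto

lemma supermartingale_onI:
  assumes "\<And>t. t \<in> I \<Longrightarrow> X t \<in> borel_measurable (F t)" "\<And>t. t \<in> I \<Longrightarrow> integrable M (X t)"
    and "\<And>s t. s \<in> I \<Longrightarrow> t \<in> I \<Longrightarrow> s \<le> t \<Longrightarrow>
      AE \<omega> in M. real_cond_exp M (F s) (X t) \<omega> \<le> X s \<omega>"
  shows "supermartingale_on M F I X"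
  using assms by (simp add: supermartingale_on_def adapted_on_def)

lemma supermartingale_on_adapted:
  "supermartingale_on M F I X \<Longrightarrow> t \<in> I \<Longrightarrow> X t \<in> borel_measurable (F t)"
  by (simp add: supermartingale_on_def adapted_on_def)

lemma supermartingale_on_integrable:
  "supermartingale_on M F I X \<Longrightarrow> t \<in> I \<Longrightarrow> integrable M (X t)"
  by (simp add: supermartingale_on_def)

lemma supermartingale_on_cond_exp_le_self:
  "supermartingale_on M F I X \<Longrightarrow> s \<in> I \<Longrightarrow> t \<in> I \<Longrightarrow> s \<le> t \<Longrightarrow>
    AE \<omega> in M. real_cond_exp M (F s) (X t) \<omega> \<le> X s \<omega>"
  by (simp add: supermartingale_on_def)

lemma (in prob_space) sigma_finite_subalgebra_filtration_on:
  assumes "filtration_on M F I" "t \<in> I"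
  shows "sigma_finite_subalgebra M (F t)"
proof (rule finite_measure_subalgebra_is_sigma_finite)
  show "finite_measure_subalgebra M (F t)"
    unfolding finite_measure_subalgebra_def finite_measure_subalgebra_axioms_def
    using finite_measure_axioms filtration_on_subalgebra[OF assms] by simp
qed

lemma (in sigma_finite_subalgebra) real_cond_exp_eq_on:
  assumes f: "integrable M f" and g: "integrable M g"
    and A: "A \<in> sets F" and eq: "\<And>\<omega>. \<omega> \<in> A \<Longrightarrow> f \<omega> = g \<omega>"
  shows "AE \<omega> in M. \<omega> \<in> A \<longrightarrow> real_cond_exp M F f \<omega> = real_cond_exp M F g \<omega>"
proof -
  have [measurable]: "A \<in> sets M" using A subalg by (auto simp: subalgebra_def)
  have mult: "AE \<omega> in M. real_cond_exp M F (\<lambda>\<omega>. indicator A \<omega> * h \<omega>) \<omega>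
      = indicator A \<omega> * real_cond_exp M F h \<omega>" if "integrable M h" for h :: "'a \<Rightarrow> real"
    using A that integrable_mult_indicator[OF \<open>A \<in> sets M\<close> that]
    by (intro real_cond_exp_mult) auto
  have fg: "(\<lambda>\<omega>. indicator A \<omega> * f \<omega>) = (\<lambda>\<omega>. indicator A \<omega> * g \<omega>)"
    using eq by (auto simp: indicator_def)
  show ?thesis
    using mult[OF f] mult[OF g] unfolding fg
  proof eventually_elim
    case (elim \<omega>)
    show ?case
    proof
      assume "\<omega> \<in> A"
      with elim show "real_cond_exp M F f \<omega> = real_cond_exp M F g \<omega>" by simp
    qed
  qed
qed

lemma integrable_between:
  fixes h :: "'a \<Rightarrow> real"
  assumes "integrable M f" "integrable M g" "h \<in> borel_measurable M"
    and "AE \<omega> in M. f \<omega> \<le> h \<omega> \<and> h \<omega> \<le> g \<omega>"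
  shows "integrable M h"
proof (rule Bochner_Integration.integrable_bound)
  show "integrable M (\<lambda>\<omega>. \<bar>f \<omega>\<bar> + \<bar>g \<omega>\<bar>)"
    using assms(1,2) by auto
  show "AE \<omega> in M. norm (h \<omega>) \<le> norm (\<bar>f \<omega>\<bar> + \<bar>g \<omega>\<bar>)"
    using assms(4) by eventually_elim auto
qed fact

lemma (in prob_space) supermartingale_on_cond_exp_le:
  assumes filt: "filtration_on M F I" and X: "supermartingale_on M F I X"
    and I: "s \<in> I" "t \<in> I" "u \<in> I" "s \<le> t" "t \<le> u"
  shows "AE \<omega> in M. real_cond_exp M (F s) (X u) \<omega> \<le> real_cond_exp M (F s) (X t) \<omega>"
proof -
  interpret Fs: sigma_finite_subalgebra M "F s"
    using filt I(1) by (rule sigma_finite_subalgebra_filtration_on)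
  interpret Ft: sigma_finite_subalgebra M "F t"
    using filt I(2) by (rule sigma_finite_subalgebra_filtration_on)
  have int: "integrable M (X u)" "integrable M (X t)"
    using X I(2,3) by (simp_all add: supermartingale_on_integrable)
  have "AE \<omega> in M. real_cond_exp M (F t) (X u) \<omega> \<le> X t \<omega>"
    using X I(2,3,5) by (rule supermartingale_on_cond_exp_le_self)
  then have "AE \<omega> in M. real_cond_exp M (F s) (real_cond_exp M (F t) (X u)) \<omega>
      \<le> real_cond_exp M (F s) (X t) \<omega>"
    using int by (intro Fs.real_cond_exp_mono Ft.real_cond_exp_int(1))
  moreover have "AE \<omega> in M. real_cond_exp M (F s) (real_cond_exp M (F t) (X u)) \<omega>
      = real_cond_exp M (F s) (X u) \<omega>"
    using Ft.subalg filtration_on_subalgebra_mono[OF filt I(1,2,4)] int(1)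
    by (rule Fs.real_cond_exp_nested_subalg)
  ultimately show ?thesis by eventually_elim linarith
qed

lemma (in prob_space) supermartingale_on_fun_upd:
  assumes filt: "filtration_on M F I" and X: "supermartingale_on M F I X"
    and t: "t \<in> I" "t' \<in> I" "t < t'" and succ: "\<And>u. u \<in> I \<Longrightarrow> t < u \<Longrightarrow> t' \<le> u"
    and Y: "Y \<in> borel_measurable (F t)"
    and between: "AE \<omega> in M. real_cond_exp M (F t) (X t') \<omega> \<le> Y \<omega> \<and> Y \<omega> \<le> X t \<omega>"
  shows "supermartingale_on M F I (X(t := Y))"
proof -
  interpret Ft: sigma_finite_subalgebra M "F t"
    using filt t(1) by (rule sigma_finite_subalgebra_filtration_on)
  have X_int: "integrable M (X u)" if "u \<in> I" for u
    using X that by (rule supermartingale_on_integrable)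
  have Y_int: "integrable M Y"
    using Ft.real_cond_exp_int(1)[OF X_int[OF t(2)]] X_int[OF t(1)]
      measurable_from_subalg[OF Ft.subalg Y] between
    by (rule integrable_between)
  have from_t: "AE \<omega> in M. real_cond_exp M (F t) ((X(t := Y)) u) \<omega> \<le> Y \<omega>"
    if "u \<in> I" "t \<le> u" for u
  proof (cases "u = t")
    case True
    then show ?thesis
      using Ft.real_cond_exp_F_meas[OF Y_int Y] by (simp add: eventually_mono)
  next
    case False
    with that t have "AE \<omega> in M. real_cond_exp M (F t) (X u) \<omega> \<le> real_cond_exp M (F t) (X t') \<omega>"
      by (intro supermartingale_on_cond_exp_le[OF filt X] succ) auto
    with between show ?thesis
      unfolding fun_upd_other[OF False] by eventually_elim auto
  qed
  have to_t: "AE \<omega> in M. real_cond_exp M (F s) Y \<omega> \<le> X s \<omega>" if "s \<in> I" "s \<le> t" for s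
  proof -
    interpret Fs: sigma_finite_subalgebra M "F s"
      using filt that(1) by (rule sigma_finite_subalgebra_filtration_on)
    have "AE \<omega> in M. real_cond_exp M (F s) Y \<omega> \<le> real_cond_exp M (F s) (X t) \<omega>"
      using between Y_int X_int[OF t(1)] by (intro Fs.real_cond_exp_mono) auto
    moreover have "AE \<omega> in M. real_cond_exp M (F s) (X t) \<omega> \<le> X s \<omega>"
      using X that t(1) by (intro supermartingale_on_cond_exp_le_self)
    ultimately show ?thesis
      by eventually_elim auto
  qed
  show ?thesis
  proof (rule supermartingale_onI)
    fix s u assume su: "s \<in> I" "u \<in> I" "s \<le> u"
    show "AE \<omega> in M. real_cond_exp M (F s) ((X(t := Y)) u) \<omega> \<le> (X(t := Y)) s \<omega>"
    proof (cases "s = t")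
      case True
      then show ?thesis using from_t[of u] su by simp
    next
      case False
      then show ?thesis
        using to_t[of s] supermartingale_on_cond_exp_le_self[OF X su] su by (cases "u = t") simp_all
    qed
  qed (use X Y X_int Y_int in \<open>auto simp: supermartingale_on_adapted\<close>)
qed

lemma (in prob_space) minimal_supermartingale_cond_exp_eq:
  assumes filt: "filtration_on M F I" and S: "supermartingale_on M F I S"
    and S_nonneg: "\<And>u. u \<in> I \<Longrightarrow> AE \<omega> in M. 0 \<le> S u \<omega>"
    and t: "t \<in> I" "t' \<in> I" "t < t'" and succ: "\<And>u. u \<in> I \<Longrightarrow> t < u \<Longrightarrow> t' \<le> u"
    and A [measurable]: "A \<in> sets (F t)"
    and minimal: "\<And>Y. supermartingale_on M F I (S(t := Y)) \<Longrightarrow> AE \<omega> in M. 0 \<le> Y \<omega> \<Longrightarrow>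
      (\<And>\<omega>. \<omega> \<in> A \<Longrightarrow> Y \<omega> = S t \<omega>) \<Longrightarrow> AE \<omega> in M. S t \<omega> \<le> Y \<omega>"
  shows "AE \<omega> in M. \<omega> \<notin> A \<longrightarrow> S t \<omega> = real_cond_exp M (F t) (S t') \<omega>"
proof -
  interpret Ft: sigma_finite_subalgebra M "F t"
    using filt t(1) by (rule sigma_finite_subalgebra_filtration_on)
  define Y where "Y \<omega> = (if \<omega> \<in> A then S t \<omega> else real_cond_exp M (F t) (S t') \<omega>)" for \<omega>
  have [measurable]: "S t \<in> borel_measurable (F t)"
    using S t(1) by (rule supermartingale_on_adapted)
  have cond_le: "AE \<omega> in M. real_cond_exp M (F t) (S t') \<omega> \<le> S t \<omega>"
    using S t(1,2) less_imp_le[OF t(3)] by (rule supermartingale_on_cond_exp_le_self)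
  have "supermartingale_on M F I (S(t := Y))"
  proof (rule supermartingale_on_fun_upd[OF filt S t succ])
    show "Y \<in> borel_measurable (F t)"
      unfolding Y_def by measurable
    show "AE \<omega> in M. real_cond_exp M (F t) (S t') \<omega> \<le> Y \<omega> \<and> Y \<omega> \<le> S t \<omega>"
      using cond_le by eventually_elim (auto simp: Y_def)
  qed
  moreover have "AE \<omega> in M. 0 \<le> Y \<omega>"
  proof -
    have "AE \<omega> in M. 0 \<le> real_cond_exp M (F t) (S t') \<omega>"
      using S_nonneg[OF t(2)] supermartingale_on_integrable[OF S t(2)]
      by (intro Ft.real_cond_exp_pos) auto
    with S_nonneg[OF t(1)] show ?thesis
      by eventually_elim (simp add: Y_def)
  qed
  moreover have "Y \<omega> = S t \<omega>" if "\<omega> \<in> A" for \<omega>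
    using that by (simp add: Y_def)
  ultimately have "AE \<omega> in M. S t \<omega> \<le> Y \<omega>"
    by (rule minimal)
  with cond_le show ?thesis
    by eventually_elim (auto simp: Y_def)
qed

lemma stopped_fun_upd:
  assumes before: "\<And>\<omega>. \<omega> \<in> B \<Longrightarrow> t < \<tau> \<omega>"
    and outside: "\<And>\<omega>. \<omega> \<notin> B \<Longrightarrow> P' t \<omega> = P t \<omega>" and other: "\<And>s. s \<noteq> t \<Longrightarrow> P' s = P s"
  shows "stopped \<tau> P' = (stopped \<tau> P)(t := \<lambda>\<omega>. if \<omega> \<in> B then P' t \<omega> else stopped \<tau> P t \<omega>)"
proof (intro ext)
  fix u \<omega>
  show "stopped \<tau> P' u \<omega> = ((stopped \<tau> P)(t := \<lambda>\<omega>. if \<omega> \<in> B then P' t \<omega> else stopped \<tau> P t \<omega>)) u \<omega>"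
  proof (cases "\<omega> \<in> B")
    case True
    then have "min u (\<tau> \<omega>) = t \<longleftrightarrow> u = t"
      using before[OF True] by (auto simp: min_def)
    then show ?thesis
      using True other by (auto simp: stopped_def)
  next
    case False
    then have "P' s \<omega> = P s \<omega>" for s
      using outside other by (cases "s = t") auto
    then show ?thesis
      using False by (simp add: stopped_def)
  qed
qed

lemma integrable_mult_stopped:
  assumes X: "integrable M (stopped \<tau> (\<lambda>s \<omega>. S s \<omega> * V s \<omega>) t)"
    and G: "integrable M (\<lambda>\<omega>. \<bar>G t \<omega>\<bar> * indicator D \<omega>)"
    and [measurable]: "S t \<in> borel_measurable M" "V t \<in> borel_measurable M"
    and S_le_1: "AE \<omega> in M. \<omega> \<in> D \<longrightarrow> \<bar>S t \<omega>\<bar> \<le> 1"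
    and S_zero: "AE \<omega> in M. \<omega> \<notin> D \<longrightarrow> S t \<omega> = 0"
    and V_eq: "AE \<omega> in M. \<omega> \<in> D \<and> \<tau> \<omega> \<le> t \<longrightarrow> V t \<omega> = G t \<omega>"
  shows "integrable M (\<lambda>\<omega>. S t \<omega> * V t \<omega>)"
proof (rule Bochner_Integration.integrable_bound)
  show "integrable M (\<lambda>\<omega>. \<bar>stopped \<tau> (\<lambda>s \<omega>. S s \<omega> * V s \<omega>) t \<omega>\<bar> + \<bar>G t \<omega>\<bar> * indicator D \<omega>)"
    using X G by auto
  show "AE \<omega> in M. norm (S t \<omega> * V t \<omega>)
      \<le> norm (\<bar>stopped \<tau> (\<lambda>s \<omega>. S s \<omega> * V s \<omega>) t \<omega>\<bar> + \<bar>G t \<omega>\<bar> * indicator D \<omega>)"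
    using S_le_1 S_zero V_eq
  proof eventually_elim
    case (elim \<omega>)
    show ?case
    proof (cases "t \<le> \<tau> \<omega>")
      case True
      then show ?thesis by (simp add: stopped_def min_absorb1)
    next
      case False
      show ?thesis
      proof (cases "\<omega> \<in> D")
        case True
        then have "\<bar>S t \<omega>\<bar> * \<bar>G t \<omega>\<bar> \<le> \<bar>G t \<omega>\<bar>"
          using elim by (intro mult_left_le_one_le) auto
        then show ?thesis
          using True False elim by (simp add: abs_mult)
      qed (use elim in simp)
    qed
  qed
qed measurable

lemma (in prob_space) supermartingale_on_stopped_mult_lower:
  fixes \<tau> :: "'a \<Rightarrow> enat" and S V :: "enat \<Rightarrow> 'a \<Rightarrow> real"
  defines "X \<equiv> stopped \<tau> (\<lambda>s \<omega>. S s \<omega> * V s \<omega>)"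
  assumes filt: "filtration_on M F I" and X_sup: "supermartingale_on M F I X"
    and t: "t \<in> I" "t' \<in> I" "t < t'" and succ: "\<And>u. u \<in> I \<Longrightarrow> t < u \<Longrightarrow> t' \<le> u"
    and [measurable]: "B \<in> sets (F t)" "Z \<in> borel_measurable (F t)" "S t \<in> borel_measurable (F t)"
    and lower: "\<And>\<omega>. \<omega> \<in> B \<Longrightarrow> t < \<tau> \<omega> \<and> real_cond_exp M (F t) (X t') \<omega> \<le> S t \<omega> * Z \<omega>
      \<and> S t \<omega> * Z \<omega> \<le> S t \<omega> * V t \<omega>"
  shows "supermartingale_on M F I
    (stopped \<tau> (\<lambda>s \<omega>. S s \<omega> * (V(t := \<lambda>\<omega>. if \<omega> \<in> B then Z \<omega> else V t \<omega>)) s \<omega>))"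
proof -
  define W where "W = (\<lambda>\<omega>. if \<omega> \<in> B then Z \<omega> else V t \<omega>)"
  define Y where "Y = (\<lambda>\<omega>. if \<omega> \<in> B then S t \<omega> * Z \<omega> else X t \<omega>)"
  have [measurable]: "X t \<in> borel_measurable (F t)"
    using X_sup t(1) by (rule supermartingale_on_adapted)
  have Y_meas: "Y \<in> borel_measurable (F t)"
    unfolding Y_def by measurable
  have "stopped \<tau> (\<lambda>s \<omega>. S s \<omega> * (V(t := W)) s \<omega>)
      = X(t := \<lambda>\<omega>. if \<omega> \<in> B then S t \<omega> * (V(t := W)) t \<omega> else X t \<omega>)"
    unfolding X_def using lower
    by (intro stopped_fun_upd[where P' = "\<lambda>s \<omega>. S s \<omega> * (V(t := W)) s \<omega>"]) (auto simp: W_def)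
  also have "(\<lambda>\<omega>. if \<omega> \<in> B then S t \<omega> * (V(t := W)) t \<omega> else X t \<omega>) = Y"
    by (auto simp: Y_def W_def)
  finally have stopped_eq: "stopped \<tau> (\<lambda>s \<omega>. S s \<omega> * (V(t := W)) s \<omega>) = X(t := Y)" .
  have "supermartingale_on M F I (X(t := Y))"
  proof (rule supermartingale_on_fun_upd[OF filt X_sup t succ Y_meas])
    have "AE \<omega> in M. real_cond_exp M (F t) (X t') \<omega> \<le> X t \<omega>"
      using X_sup t(1,2) less_imp_le[OF t(3)] by (rule supermartingale_on_cond_exp_le_self)
    then show "AE \<omega> in M. real_cond_exp M (F t) (X t') \<omega> \<le> Y \<omega> \<and> Y \<omega> \<le> X t \<omega>"
      by eventually_elim (use lower in \<open>auto simp: Y_def X_def stopped_def min_absorb1\<close>)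
  qed
  then show ?thesis
    unfolding W_def[symmetric] stopped_eq .
qed

lemma max_div_between:
  fixes s c g v :: real
  assumes "0 < s" "c < s * v" "g < v"
  shows "max g (c / s) < v" "c \<le> s * max g (c / s)"
proof -
  show "max g (c / s) < v"
    using assms by (simp add: divide_less_eq mult.commute)
  have "c = s * (c / s)"
    using assms(1) by simp
  also have "\<dots> \<le> s * max g (c / s)"
    using assms(1) by (intro mult_left_mono) auto
  finally show "c \<le> s * max g (c / s)" .
qed

lemma (in prob_space) minimal_value_cond_exp_eq:
  fixes \<tau> :: "'a \<Rightarrow> enat" and S V G :: "enat \<Rightarrow> 'a \<Rightarrow> real"
  defines "X \<equiv> stopped \<tau> (\<lambda>s \<omega>. S s \<omega> * V s \<omega>)"
  assumes filt: "filtration_on M F I" and X_sup: "supermartingale_on M F I X"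
    and t: "t \<in> I" "t' \<in> I" "t < t'" and succ: "\<And>u. u \<in> I \<Longrightarrow> t < u \<Longrightarrow> t' \<le> u"
    and meas [measurable]: "S t \<in> borel_measurable (F t)" "V t \<in> borel_measurable (F t)"
      "G t \<in> borel_measurable (F t)" "{\<omega> \<in> space M. t < \<tau> \<omega>} \<in> sets (F t)" "D \<in> sets (F t)"
    and S_pos: "AE \<omega> in M. \<omega> \<in> D \<longrightarrow> 0 < S t \<omega>"
    and dom: "AE \<omega> in M. \<omega> \<in> D \<longrightarrow> G t \<omega> \<le> V t \<omega>"
    and minimal: "\<And>Z. Z \<in> borel_measurable (F t) \<Longrightarrow> AE \<omega> in M. \<omega> \<in> D \<longrightarrow> G t \<omega> \<le> Z \<omega> \<Longrightarrow>
      supermartingale_on M F I (stopped \<tau> (\<lambda>s \<omega>. S s \<omega> * (V(t := Z)) s \<omega>)) \<Longrightarrow>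
      AE \<omega> in M. \<omega> \<in> D \<longrightarrow> V t \<omega> \<le> Z \<omega>"
  shows "AE \<omega> in M. t < \<tau> \<omega> \<and> \<omega> \<in> D \<and> G t \<omega> < V t \<omega> \<longrightarrow>
    S t \<omega> * V t \<omega> = real_cond_exp M (F t) (X t') \<omega>"
proof -
  define c where "c = real_cond_exp M (F t) (X t')"
  define B where "B = {\<omega> \<in> space M. t < \<tau> \<omega> \<and> \<omega> \<in> D \<and> 0 < S t \<omega> \<and> G t \<omega> < V t \<omega>
    \<and> c \<omega> < S t \<omega> * V t \<omega>}"
  define Z where "Z \<omega> = max (G t \<omega>) (c \<omega> / S t \<omega>)" for \<omega>
  have space: "space (F t) = space M"
    using filtration_on_subalgebra[OF filt t(1)] by (simp add: subalgebra_def)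
  have [measurable]: "c \<in> borel_measurable (F t)"
    by (simp add: c_def)
  have "{\<omega> \<in> space (F t). t < \<tau> \<omega> \<and> \<omega> \<in> D \<and> 0 < S t \<omega> \<and> G t \<omega> < V t \<omega>
      \<and> c \<omega> < S t \<omega> * V t \<omega>} \<in> sets (F t)"
    using meas(4) unfolding space[symmetric] by measurable
  then have B [measurable]: "B \<in> sets (F t)"
    unfolding B_def space .
  have Z_meas: "Z \<in> borel_measurable (F t)"
    unfolding Z_def by measurable
  have lower: "t < \<tau> \<omega> \<and> c \<omega> \<le> S t \<omega> * Z \<omega> \<and> S t \<omega> * Z \<omega> \<le> S t \<omega> * V t \<omega> \<and> Z \<omega> < V t \<omega>"
    if "\<omega> \<in> B" for \<omega>
    using that max_div_between[of "S t \<omega>" "c \<omega>" "V t \<omega>" "G t \<omega>"] by (auto simp: B_def Z_def)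
  have "supermartingale_on M F I
      (stopped \<tau> (\<lambda>s \<omega>. S s \<omega> * (V(t := \<lambda>\<omega>. if \<omega> \<in> B then Z \<omega> else V t \<omega>)) s \<omega>))"
    by (rule supermartingale_on_stopped_mult_lower[OF filt X_sup[unfolded X_def] t succ B Z_meas meas(1)])
      (simp_all add: lower[unfolded c_def X_def])
  moreover have "AE \<omega> in M. \<omega> \<in> D \<longrightarrow> G t \<omega> \<le> (if \<omega> \<in> B then Z \<omega> else V t \<omega>)"
    using dom by eventually_elim (simp add: Z_def)
  ultimately have "AE \<omega> in M. \<omega> \<in> D \<longrightarrow> V t \<omega> \<le> (if \<omega> \<in> B then Z \<omega> else V t \<omega>)"
    using Z_meas by (intro minimal) simp_all
  then have "AE \<omega> in M. \<omega> \<notin> B"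
  proof eventually_elim
    case (elim \<omega>)
    show ?case
    proof
      assume "\<omega> \<in> B"
      then show False
        using elim lower[OF \<open>\<omega> \<in> B\<close>] by (simp add: B_def)
    qed
  qed
  moreover have "AE \<omega> in M. c \<omega> \<le> X t \<omega>"
    unfolding c_def using X_sup t(1,2) less_imp_le[OF t(3)] by (rule supermartingale_on_cond_exp_le_self)
  ultimately show ?thesis
    using S_pos AE_space
  proof eventually_elim
    case (elim \<omega>)
    show ?case
    proof
      assume \<omega>: "t < \<tau> \<omega> \<and> \<omega> \<in> D \<and> G t \<omega> < V t \<omega>"
      with elim have "\<not> c \<omega> < S t \<omega> * V t \<omega>"
        by (auto simp: B_def)
      moreover have "X t \<omega> = S t \<omega> * V t \<omega>"
        using \<omega> by (simp add: X_def stopped_def min_absorb1)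
      ultimately show "S t \<omega> * V t \<omega> = real_cond_exp M (F t) (X t') \<omega>"
        using elim by (simp add: c_def)
    qed
  qed
qed

lemma time_set_subset: "time_set T \<subseteq> time_set_T T"
  by (auto simp: time_set_def time_set_T_def)

lemma time_set_succ:
  assumes "t \<in> time_set T" "t < T"
  shows "t + 1 \<in> time_set T" "t < t + 1" "\<And>u. t < u \<Longrightarrow> t + 1 \<le> u"
proof -
  obtain n where n: "t = enat n"
    using assms(1) by (cases t) (auto simp: time_set_def)
  show "t + 1 \<in> time_set T" "t < t + 1" "\<And>u. t < u \<Longrightarrow> t + 1 \<le> u"
    using assms(2) by (auto simp: n time_set_def one_enat_def Suc_ile_eq[symmetric])
qed

lemma eff_horizon_le: "eff_horizon M F \<sigma> T \<omega> \<le> T"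
  by (simp add: eff_horizon_def)

lemma less_eff_horizon_iff:
  assumes "enat n < T"
  shows "enat n < eff_horizon M F \<sigma> T \<omega> \<longleftrightarrow>
    (\<forall>s\<le>n. real_cond_exp M (F (enat s)) (indicator (Dset M \<sigma> (enat (Suc s)))) \<omega> \<noteq> 0)"
    (is "_ \<longleftrightarrow> (\<forall>s\<le>n. ?ce s \<noteq> 0)")
proof -
  have less_Inf: "enat n < Inf Z \<longleftrightarrow> (\<forall>z\<in>Z. enat n < z)" for Z
    by (simp add: Suc_ile_eq[symmetric] le_Inf_iff)
  have below_T: "enat s < T" if "s \<le> n" for s
    using assms that by (metis enat_ord_simps(1) le_less_trans)
  have "enat n < eff_horizon M F \<sigma> T \<omega> \<longleftrightarrow> (\<forall>t. enat t < T \<and> ?ce t = 0 \<longrightarrow> n < t)"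
    using assms unfolding eff_horizon_def by (auto simp: less_Inf)
  also have "\<dots> \<longleftrightarrow> (\<forall>s\<le>n. ?ce s \<noteq> 0)"
    using below_T by (meson not_le)
  finally show ?thesis .
qed

lemma less_eff_horizon_sets:
  assumes filt: "filtration_on M F (time_set T)" and t: "t \<in> time_set T" "t < T"
  shows "{\<omega> \<in> space M. t < eff_horizon M F \<sigma> T \<omega>} \<in> sets (F t)"
proof -
  obtain n where n: "t = enat n"
    using t(1) by (cases t) (auto simp: time_set_def)
  let ?ce = "\<lambda>s. real_cond_exp M (F (enat s)) (indicator (Dset M \<sigma> (enat (Suc s))))"
  have I: "enat s \<in> time_set T" if "s \<le> n" for s
    using that t(2) order_trans[of "enat s" "enat n" T] by (auto simp: n time_set_def)
  have space: "space (F t) = space M"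
    using filtration_on_subalgebra[OF filt t(1)] by (simp add: subalgebra_def)
  have "{\<omega> \<in> space M. t < eff_horizon M F \<sigma> T \<omega>} = {\<omega> \<in> space (F t). \<forall>s\<in>{..n}. ?ce s \<omega> \<noteq> 0}"
    using space t(2) by (auto simp: n less_eff_horizon_iff)
  also have "\<dots> \<in> sets (F t)"
  proof (intro sets.sets_Collect_finite_All)
    fix s assume "s \<in> {..n}"
    then have [measurable]: "?ce s \<in> borel_measurable (F t)"
      using filtration_on_subalgebra_mono[OF filt I I[OF order_refl]] unfolding n
      by (intro measurable_from_subalg[OF _ borel_measurable_cond_exp]) auto
    show "{\<omega> \<in> space (F t). ?ce s \<omega> \<noteq> 0} \<in> sets (F t)"
      by measurable
  qed simp
  finally show ?thesis .
qed

lemma Dset_sets: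
  assumes "subalgebra M (F t)" "t \<noteq> \<infinity>" "{\<omega> \<in> space M. \<sigma> \<omega> \<le> t} \<in> sets (F t)"
  shows "Dset M \<sigma> t \<in> sets (F t)"
proof -
  have "Dset M \<sigma> t = space (F t) - {\<omega> \<in> space M. \<sigma> \<omega> \<le> t}"
    using assms(1,2) by (auto simp: Dset_def subalgebra_def not_le)
  then show ?thesis using assms(3) by auto
qed

lemma integrable_abs_mult_indicator_SUP:
  assumes "(\<integral>\<^sup>+\<omega>. (SUP t\<in>I. ennreal (\<bar>G t \<omega>\<bar> * indicator (D t) \<omega>)) \<partial>M) < \<infinity>"
    and "t \<in> I" and [measurable]: "G t \<in> borel_measurable M" "D t \<in> sets M"
  shows "integrable M (\<lambda>\<omega>. \<bar>G t \<omega>\<bar> * indicator (D t) \<omega>)"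
proof (rule integrableI_bounded)
  have "(\<integral>\<^sup>+\<omega>. ennreal (norm (\<bar>G t \<omega>\<bar> * indicator (D t) \<omega>)) \<partial>M)
      \<le> (\<integral>\<^sup>+\<omega>. (SUP t\<in>I. ennreal (\<bar>G t \<omega>\<bar> * indicator (D t) \<omega>)) \<partial>M)"
    using \<open>t \<in> I\<close> by (intro nn_integral_mono SUP_upper2) (auto simp: abs_mult)
  then show "(\<integral>\<^sup>+\<omega>. ennreal (norm (\<bar>G t \<omega>\<bar> * indicator (D t) \<omega>)) \<partial>M) < \<infinity>"
    using assms(1) by (rule le_less_trans)
qed measurable

lemma S_eq_cond_exp_succ:
  fixes G V S :: "enat \<Rightarrow> 'a \<Rightarrow> real"
  assumes prob: "prob_space M" and filt: "filtration_on M F (time_set_T T)"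
    and G_adapt: "adapted_on F (time_set_T T) G" and V_adapt: "adapted_on F (time_set T) V"
    and S_sup: "supermartingale_on M F (time_set_T T) S"
    and S_nonneg: "\<forall>t\<in>time_set_T T. AE \<omega> in M. 0 \<le> S t \<omega>"
    and S_one: "\<forall>t\<in>time_set T. AE \<omega> in M.
                  \<omega> \<in> Dset M \<sigma> t \<and> V t \<omega> = G t \<omega> \<longrightarrow> S t \<omega> = 1"
    and S_inf: "T = \<infinity> \<Longrightarrow> AE \<omega> in M. S \<infinity> \<omega> = indicator (Dset M \<sigma> \<infinity>) \<omega>"
    and S_min: "\<forall>R. supermartingale_on M F (time_set_T T) R
                  \<and> (\<forall>t\<in>time_set_T T. AE \<omega> in M. 0 \<le> R t \<omega>)
                  \<and> (\<forall>t\<in>time_set T. AE \<omega> in M.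
                        \<omega> \<in> Dset M \<sigma> t \<and> V t \<omega> = G t \<omega> \<longrightarrow> R t \<omega> = 1)
                  \<and> (T = \<infinity> \<longrightarrow> (AE \<omega> in M. R \<infinity> \<omega> = indicator (Dset M \<sigma> \<infinity>) \<omega>))
                  \<longrightarrow> (\<forall>t\<in>time_set_T T. AE \<omega> in M. S t \<omega> \<le> R t \<omega>)"
    and t: "t \<in> time_set T" "t < T"
  shows "AE \<omega> in M. V t \<omega> \<noteq> G t \<omega> \<longrightarrow> S t \<omega> = real_cond_exp M (F t) (S (t + 1)) \<omega>"
proof -
  define A where "A = {\<omega> \<in> space M. V t \<omega> = G t \<omega>}"
  have t_T: "t \<in> time_set_T T" "t + 1 \<in> time_set_T T"
    using time_set_subset time_set_succ(1)[OF t] t(1) by auto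
  have space: "space (F t) = space M"
    using filtration_on_subalgebra[OF filt t_T(1)] by (simp add: subalgebra_def)
  have [measurable]: "V t \<in> borel_measurable (F t)" "G t \<in> borel_measurable (F t)"
    using V_adapt G_adapt t(1) t_T(1) by (simp_all add: adapted_on_def)
  have "{\<omega> \<in> space (F t). V t \<omega> = G t \<omega>} \<in> sets (F t)"
    by measurable
  then have A: "A \<in> sets (F t)"
    by (simp add: A_def space)
  have "AE \<omega> in M. S t \<omega> \<le> Y \<omega>"
    if Y_sup: "supermartingale_on M F (time_set_T T) (S(t := Y))" and "AE \<omega> in M. 0 \<le> Y \<omega>"
      and Y_A: "\<And>\<omega>. \<omega> \<in> A \<Longrightarrow> Y \<omega> = S t \<omega>" for Y
  proof -
    have "\<forall>u\<in>time_set_T T. AE \<omega> in M. 0 \<le> (S(t := Y)) u \<omega>"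
      using S_nonneg \<open>AE \<omega> in M. 0 \<le> Y \<omega>\<close> by simp
    moreover have "\<forall>u\<in>time_set T. AE \<omega> in M.
        \<omega> \<in> Dset M \<sigma> u \<and> V u \<omega> = G u \<omega> \<longrightarrow> (S(t := Y)) u \<omega> = 1"
      using S_one Y_A by (auto simp: A_def Dset_def)
    moreover have "T = \<infinity> \<longrightarrow> (AE \<omega> in M. (S(t := Y)) \<infinity> \<omega> = indicator (Dset M \<sigma> \<infinity>) \<omega>)"
      using S_inf t(1) by (auto simp: time_set_def)
    ultimately have "\<forall>u\<in>time_set_T T. AE \<omega> in M. S u \<omega> \<le> (S(t := Y)) u \<omega>"
      using S_min Y_sup by blast
    then show ?thesis
      using t_T(1) by auto
  qed
  then have "AE \<omega> in M. \<omega> \<notin> A \<longrightarrow> S t \<omega> = real_cond_exp M (F t) (S (t + 1)) \<omega>"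
    using S_nonneg t_T A time_set_succ(2,3)[OF t]
    by (intro prob_space.minimal_supermartingale_cond_exp_eq[OF prob filt S_sup]) auto
  then show ?thesis
    by (rule AE_mp) (auto simp: A_def intro!: AE_I2)
qed

lemma SV_eq_cond_exp_stopped_succ:
  fixes G V S :: "enat \<Rightarrow> 'a \<Rightarrow> real"
  assumes prob: "prob_space M" and filt: "filtration_on M F (time_set_T T)"
    and stop: "\<forall>t\<in>time_set T. {\<omega> \<in> space M. \<sigma> \<omega> \<le> t} \<in> sets (F t)"
    and G_adapt: "adapted_on F (time_set_T T) G"
    and S_sup: "supermartingale_on M F (time_set_T T) S"
    and S_pos: "\<forall>t\<in>time_set T. AE \<omega> in M. \<omega> \<in> Dset M \<sigma> t \<longrightarrow> 0 < S t \<omega> \<and> S t \<omega> \<le> 1"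
    and V_adapt: "adapted_on F (time_set T) V"
    and V_dom: "\<forall>t\<in>time_set T. AE \<omega> in M. \<omega> \<in> Dset M \<sigma> t \<longrightarrow> G t \<omega> \<le> V t \<omega>"
    and V_sup: "supermartingale_on M F (time_set T)
                  (stopped (eff_horizon M F \<sigma> T) (\<lambda>t \<omega>. S t \<omega> * V t \<omega>))"
    and V_min: "\<forall>W. adapted_on F (time_set T) W
                  \<and> (\<forall>t\<in>time_set T. AE \<omega> in M. \<omega> \<in> Dset M \<sigma> t \<longrightarrow> G t \<omega> \<le> W t \<omega>)
                  \<and> supermartingale_on M F (time_set T)
                      (stopped (eff_horizon M F \<sigma> T) (\<lambda>t \<omega>. S t \<omega> * W t \<omega>))
                  \<longrightarrow> (\<forall>t\<in>time_set T. AE \<omega> in M. \<omega> \<in> Dset M \<sigma> t \<longrightarrow> V t \<omega> \<le> W t \<omega>)"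
    and t: "t \<in> time_set T" "t < T"
  shows "AE \<omega> in M. t < eff_horizon M F \<sigma> T \<omega> \<and> \<omega> \<in> Dset M \<sigma> t \<and> G t \<omega> < V t \<omega> \<longrightarrow>
    S t \<omega> * V t \<omega> = real_cond_exp M (F t)
      (stopped (eff_horizon M F \<sigma> T) (\<lambda>s \<omega>. S s \<omega> * V s \<omega>) (t + 1)) \<omega>"
proof -
  obtain n where n: "t = enat n"
    using t(1) by (cases t) (auto simp: time_set_def)
  have filt': "filtration_on M F (time_set T)"
    using filt time_set_subset by (rule filtration_on_subset)
  have sub: "subalgebra M (F t)"
    using filt' t(1) by (rule filtration_on_subalgebra)
  have [measurable]: "S t \<in> borel_measurable (F t)" "V t \<in> borel_measurable (F t)"
      "G t \<in> borel_measurable (F t)"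
    using supermartingale_on_adapted[OF S_sup] V_adapt G_adapt t(1) time_set_subset[of T]
    by (auto simp: adapted_on_def)
  have "{\<omega> \<in> space M. t < eff_horizon M F \<sigma> T \<omega>} \<in> sets (F t)"
    using filt' t by (rule less_eff_horizon_sets)
  moreover have "Dset M \<sigma> t \<in> sets (F t)"
    using sub stop t(1) by (intro Dset_sets) (auto simp: n)
  moreover have "AE \<omega> in M. \<omega> \<in> Dset M \<sigma> t \<longrightarrow> V t \<omega> \<le> Z \<omega>"
    if Z: "Z \<in> borel_measurable (F t)" "AE \<omega> in M. \<omega> \<in> Dset M \<sigma> t \<longrightarrow> G t \<omega> \<le> Z \<omega>"
      and sup: "supermartingale_on M F (time_set T)
        (stopped (eff_horizon M F \<sigma> T) (\<lambda>s \<omega>. S s \<omega> * (V(t := Z)) s \<omega>))" for Z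
  proof -
    have "adapted_on F (time_set T) (V(t := Z))"
      using V_adapt Z(1) by (simp add: adapted_on_def)
    moreover have "\<forall>u\<in>time_set T. AE \<omega> in M. \<omega> \<in> Dset M \<sigma> u \<longrightarrow> G u \<omega> \<le> (V(t := Z)) u \<omega>"
      using V_dom Z(2) by simp
    ultimately show ?thesis
      using V_min sup t(1) by fastforce
  qed
  ultimately show ?thesis
    using S_pos V_dom t(1) time_set_succ[OF t]
    by (intro prob_space.minimal_value_cond_exp_eq[OF prob filt' V_sup])
      (auto elim: AE_mp)
qed

lemma cond_exp_stopped_succ_eq:
  fixes G V S :: "enat \<Rightarrow> 'a \<Rightarrow> real"
  assumes prob: "prob_space M" and filt: "filtration_on M F (time_set_T T)"
    and stop: "\<forall>t\<in>time_set T. {\<omega> \<in> space M. \<sigma> \<omega> \<le> t} \<in> sets (F t)"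
    and G_adapt: "adapted_on F (time_set_T T) G"
    and G_int: "(\<integral>\<^sup>+\<omega>. (SUP t\<in>time_set_T T. ennreal (\<bar>G t \<omega>\<bar> * indicator (Dset M \<sigma> t) \<omega>)) \<partial>M) < \<infinity>"
    and S_sup: "supermartingale_on M F (time_set_T T) S"
    and S_pos: "\<forall>t\<in>time_set T. AE \<omega> in M. \<omega> \<in> Dset M \<sigma> t \<longrightarrow> 0 < S t \<omega> \<and> S t \<omega> \<le> 1"
    and S_zero: "\<forall>t\<in>time_set T. AE \<omega> in M. \<omega> \<notin> Dset M \<sigma> t \<longrightarrow> S t \<omega> = 0"
    and V_eq: "\<forall>t\<in>time_set T. AE \<omega> in M.
                 \<omega> \<in> Dset M \<sigma> t \<and> eff_horizon M F \<sigma> T \<omega> \<le> t \<longrightarrow> V t \<omega> = G t \<omega>"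
    and V_adapt: "adapted_on F (time_set T) V"
    and V_sup: "supermartingale_on M F (time_set T)
                  (stopped (eff_horizon M F \<sigma> T) (\<lambda>t \<omega>. S t \<omega> * V t \<omega>))"
    and t: "t \<in> time_set T" "t < T"
  shows "AE \<omega> in M. t < eff_horizon M F \<sigma> T \<omega> \<longrightarrow>
    real_cond_exp M (F t) (stopped (eff_horizon M F \<sigma> T) (\<lambda>s \<omega>. S s \<omega> * V s \<omega>) (t + 1)) \<omega>
    = real_cond_exp M (F t) (\<lambda>\<omega>. S (t + 1) \<omega> * V (t + 1) \<omega>) \<omega>"
proof -
  obtain n where n: "t = enat n"
    using t(1) by (cases t) (auto simp: time_set_def)
  have filt': "filtration_on M F (time_set T)"
    using filt time_set_subset by (rule filtration_on_subset)
  interpret sigma_finite_subalgebra M "F t"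
    using filt' t(1) by (rule prob_space.sigma_finite_subalgebra_filtration_on[OF prob])
  have succ: "t + 1 \<in> time_set T" "t + 1 \<in> time_set_T T" "t + 1 \<noteq> \<infinity>"
    using time_set_succ(1)[OF t] time_set_subset by (auto simp: time_set_def)
  have sub: "subalgebra M (F (t + 1))"
    using filt succ(2) by (rule filtration_on_subalgebra)
  have [measurable]: "S (t + 1) \<in> borel_measurable M" "V (t + 1) \<in> borel_measurable M"
      "G (t + 1) \<in> borel_measurable M"
    using supermartingale_on_adapted[OF S_sup succ(2)] V_adapt G_adapt succ(1,2)
    by (auto simp: adapted_on_def intro: measurable_from_subalg[OF sub])
  have "Dset M \<sigma> (t + 1) \<in> sets (F (t + 1))"
    using sub succ stop by (intro Dset_sets) auto
  then have "Dset M \<sigma> (t + 1) \<in> sets M"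
    using sub by (auto simp: subalgebra_def)
  then have "integrable M (\<lambda>\<omega>. \<bar>G (t + 1) \<omega>\<bar> * indicator (Dset M \<sigma> (t + 1)) \<omega>)"
    using G_int succ(2) by (intro integrable_abs_mult_indicator_SUP) auto
  moreover have "AE \<omega> in M. \<omega> \<in> Dset M \<sigma> (t + 1) \<longrightarrow> \<bar>S (t + 1) \<omega>\<bar> \<le> 1"
    using bspec[OF S_pos succ(1)] by eventually_elim auto
  ultimately have SV_int: "integrable M (\<lambda>\<omega>. S (t + 1) \<omega> * V (t + 1) \<omega>)"
    using supermartingale_on_integrable[OF V_sup succ(1)] S_zero V_eq succ(1)
    by (intro integrable_mult_stopped[where \<tau> = "eff_horizon M F \<sigma> T"]) auto
  have "{\<omega> \<in> space M. t < eff_horizon M F \<sigma> T \<omega>} \<in> sets (F t)"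
    using filt' t by (rule less_eff_horizon_sets)
  with supermartingale_on_integrable[OF V_sup succ(1)] SV_int
  have "AE \<omega> in M. \<omega> \<in> {\<omega> \<in> space M. t < eff_horizon M F \<sigma> T \<omega>} \<longrightarrow>
    real_cond_exp M (F t) (stopped (eff_horizon M F \<sigma> T) (\<lambda>s \<omega>. S s \<omega> * V s \<omega>) (t + 1)) \<omega>
    = real_cond_exp M (F t) (\<lambda>\<omega>. S (t + 1) \<omega> * V (t + 1) \<omega>) \<omega>"
    by (rule real_cond_exp_eq_on)
      (use time_set_succ(3)[OF t] in \<open>auto simp: stopped_def min_absorb1\<close>)
  then show ?thesis
    by (rule AE_mp) (auto intro!: AE_I2 simp: space_restr_to_subalg)
qed

theorem lemma6p2:
  fixes M :: "'a measure" and F :: "enat \<Rightarrow> 'a measure" and T :: enat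
    and \<sigma> :: "'a \<Rightarrow> enat" and G V S :: "enat \<Rightarrow> 'a \<Rightarrow> real"
  assumes prob: "prob_space M"
    and filt: "filtration_on M F (time_set_T T)"
    and F0: "sets (F 0) = {{}, space M}"
    and stop: "\<forall>t\<in>time_set T. {\<omega> \<in> space M. \<sigma> \<omega> \<le> t} \<in> sets (F t)"
    and sigma_pos: "AE \<omega> in M. 0 < \<sigma> \<omega>"
    and G_adapt: "adapted_on F (time_set_T T) G"
    and G_int: "(\<integral>\<^sup>+\<omega>. (SUP t\<in>time_set_T T. ennreal (\<bar>G t \<omega>\<bar> * indicator (Dset M \<sigma> t) \<omega>)) \<partial>M) < \<infinity>"
    and G_inf: "T = \<infinity> \<Longrightarrow> \<forall>\<omega>\<in>Dset M \<sigma> \<infinity>.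
                  ereal (G \<infinity> \<omega>) = limsup (\<lambda>n. ereal (G (enat n) \<omega>))"
    \<comment> \<open>(i)\<close>
    and S_pos: "\<forall>t\<in>time_set T. AE \<omega> in M. \<omega> \<in> Dset M \<sigma> t \<longrightarrow> 0 < S t \<omega> \<and> S t \<omega> \<le> 1"
    and S_zero: "\<forall>t\<in>time_set T. AE \<omega> in M. \<omega> \<notin> Dset M \<sigma> t \<longrightarrow> S t \<omega> = 0"
    and V_eq: "\<forall>t\<in>time_set T. AE \<omega> in M.
                 \<omega> \<in> Dset M \<sigma> t \<and> eff_horizon M F \<sigma> T \<omega> \<le> t \<longrightarrow> V t \<omega> = G t \<omega>"
    \<comment> \<open>(ii)\<close>
    and V_adapt: "adapted_on F (time_set T) V"
    and V_dom: "\<forall>t\<in>time_set T. AE \<omega> in M. \<omega> \<in> Dset M \<sigma> t \<longrightarrow> G t \<omega> \<le> V t \<omega>"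
    and V_sup: "supermartingale_on M F (time_set T)
                  (stopped (eff_horizon M F \<sigma> T) (\<lambda>t \<omega>. S t \<omega> * V t \<omega>))"
    and V_min: "\<forall>W. adapted_on F (time_set T) W
                  \<and> (\<forall>t\<in>time_set T. AE \<omega> in M. \<omega> \<in> Dset M \<sigma> t \<longrightarrow> G t \<omega> \<le> W t \<omega>)
                  \<and> supermartingale_on M F (time_set T)
                      (stopped (eff_horizon M F \<sigma> T) (\<lambda>t \<omega>. S t \<omega> * W t \<omega>))
                  \<longrightarrow> (\<forall>t\<in>time_set T. AE \<omega> in M. \<omega> \<in> Dset M \<sigma> t \<longrightarrow> V t \<omega> \<le> W t \<omega>)"
    \<comment> \<open>(iii)\<close>
    and S_sup: "supermartingale_on M F (time_set_T T) S"
    and S_nonneg: "\<forall>t\<in>time_set_T T. AE \<omega> in M. 0 \<le> S t \<omega>"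
    and S_one: "\<forall>t\<in>time_set T. AE \<omega> in M.
                  \<omega> \<in> Dset M \<sigma> t \<and> V t \<omega> = G t \<omega> \<longrightarrow> S t \<omega> = 1"
    and S_inf: "T = \<infinity> \<Longrightarrow> AE \<omega> in M. S \<infinity> \<omega> = indicator (Dset M \<sigma> \<infinity>) \<omega>"
    and S_min: "\<forall>R. supermartingale_on M F (time_set_T T) R
                  \<and> (\<forall>t\<in>time_set_T T. AE \<omega> in M. 0 \<le> R t \<omega>)
                  \<and> (\<forall>t\<in>time_set T. AE \<omega> in M.
                        \<omega> \<in> Dset M \<sigma> t \<and> V t \<omega> = G t \<omega> \<longrightarrow> R t \<omega> = 1)
                  \<and> (T = \<infinity> \<longrightarrow> (AE \<omega> in M. R \<infinity> \<omega> = indicator (Dset M \<sigma> \<infinity>) \<omega>))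
                  \<longrightarrow> (\<forall>t\<in>time_set_T T. AE \<omega> in M. S t \<omega> \<le> R t \<omega>)"
  shows "\<forall>t\<in>time_set T. AE \<omega> in M.
           t < eff_horizon M F \<sigma> T \<omega> \<and> \<omega> \<in> Dset M \<sigma> t \<and> G t \<omega> < V t \<omega> \<longrightarrow>
             S t \<omega> = real_cond_exp M (F t) (S (t + 1)) \<omega> \<and>
             S t \<omega> * V t \<omega> = real_cond_exp M (F t) (\<lambda>x. S (t + 1) x * V (t + 1) x) \<omega>"
proof (intro ballI)
  fix t assume t: "t \<in> time_set T"
  show "AE \<omega> in M. t < eff_horizon M F \<sigma> T \<omega> \<and> \<omega> \<in> Dset M \<sigma> t \<and> G t \<omega> < V t \<omega> \<longrightarrow>
      S t \<omega> = real_cond_exp M (F t) (S (t + 1)) \<omega> \<and>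
      S t \<omega> * V t \<omega> = real_cond_exp M (F t) (\<lambda>x. S (t + 1) x * V (t + 1) x) \<omega>"
  proof (cases "t < T")
    case False
    then have "\<not> t < eff_horizon M F \<sigma> T \<omega>" for \<omega>
      using eff_horizon_le[of M F \<sigma> T \<omega>] by (meson less_le_trans)
    then show ?thesis by simp
  next
    case True
    have "AE \<omega> in M. V t \<omega> \<noteq> G t \<omega> \<longrightarrow> S t \<omega> = real_cond_exp M (F t) (S (t + 1)) \<omega>"
      by (rule S_eq_cond_exp_succ[OF prob filt G_adapt V_adapt S_sup S_nonneg S_one S_inf S_min t True])
    with SV_eq_cond_exp_stopped_succ[OF prob filt stop G_adapt S_sup S_pos V_adapt V_dom V_sup V_min
        t True]
      cond_exp_stopped_succ_eq[OF prob filt stop G_adapt G_int S_sup S_pos S_zero V_eq V_adapt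
        V_sup t True]
    show ?thesis
      by eventually_elim auto
  qed
qed

end
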